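(* Let $(W,S)$ be a finitely generated Coxeter system, $u\le v$ in $W$, $I=S(u)$, $J=S(v)$. Define $G_v:\mathcal P_I(J)\to[u,v]$ by $G_v(K)=v_K$ and $F:[u,v]\to\mathcal P_I(J)$ by $F(w)=S(w)$ (these are well defined). Then: (a) $G_v\circ F=\mathrm{id}_{[u,v]}$ and $F(G_v(K))\subseteq K$ for all $K\in\mathcal P_I(J)$. (b) $F:([u,v],\le)\to(\mathcal P_I(J),\subseteq)$ is injective and order preserving, and $F(w\vee g)=F(w)\cup F(g)$ for all $w,g\in[u,v]$. (c) $G_v:(\mathcal P_I(J),\subseteq)\to([u,v],\le)$ is surjective and order preserving, and $G_v(K\cap L)=G_v(K)\wedge G_v(L)$ for all $K,L\in\mathcal P_I(J)$. (d) For every $w\in[u,v]$, the fibre $G_v^{-1}(w)$ is closed under $\cup$ and $\cap$ (a sublattice of $\mathcal P_I(J)$), with $\min G_v^{-1}(w)=S(w)$ and $\max G_v^{-1}(w)=J\setminus\mathrm{Des}(v^{S(w)})$, both belonging to $\mathcal P_I(J)$.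
   Context: $(W,S)$ is a finitely generated Coxeter system with length function $\ell$. For $w\in W$, $S(w)\subseteq S$ is the set of simple reflections appearing in a (any) reduced expression of $w$, and $\mathrm{Des}(w)=\{s\in S:\ell(ws)<\ell(w)\}$. For $I\subseteq S$, $W_I$ is the parabolic subgroup generated by $I$, $X_I=\{u\in W:\ell(us)>\ell(u)\ \forall s\in I\}$, and every $w\in W$ factors uniquely as $w=w^Iw_I$ with $w^I\in X_I$, $w_I\in W_I$ (parabolic components along $I$). The partial order on $W$: $u\le v$ iff $v_{S(u)}=u$; the interval $[u,v]$ is a lattice with join $\vee$ and meet $\wedge$. For $I\subseteq J\subseteq S$, $\mathcal P_I(J)=\{K\subseteq S: I\subseteq K\subseteq J\}$ ordered by inclusion. *)

theory Defs
  imports "HOL-Algebra.Multiplicative_Group" "HOL-Algebra.Generated_Groups"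
begin

definition word_prod :: "('a, 'b) monoid_scheme \<Rightarrow> 'a list \<Rightarrow> 'a" where
  "word_prod G ws = foldr (\<lambda>x y. x \<otimes>\<^bsub>G\<^esub> y) ws \<one>\<^bsub>G\<^esub>"

text \<open>(W,S) is a finitely generated Coxeter system: W = carrier G is generated by the finite
  set S of involutions, and W has the Coxeter presentation
  < S | (s t)^m(s,t) = 1 >, where m(s,t) is the order of s t in W (m(s,s) = 1; the relation is void
  when s t has infinite order, in which case group.ord gives 0).  The presentation is expressed by its
  universal property.  Since the presented group is countable (S is finite), it suffices to test the
  universal property against groups whose elements are natural numbers.\<close>
definition coxeter_system :: "('a, 'b) monoid_scheme \<Rightarrow> 'a set \<Rightarrow> bool" where
  "coxeter_system G S \<longleftrightarrow>
     group G \<and> finite S \<and> S \<subseteq> carrier G \<and> \<one>\<^bsub>G\<^esub> \<notin> S \<and>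
     (\<forall>s\<in>S. s \<otimes>\<^bsub>G\<^esub> s = \<one>\<^bsub>G\<^esub>) \<and>
     generate G S = carrier G \<and>
     (\<forall>(H :: nat monoid) f. group H \<longrightarrow> f \<in> S \<rightarrow> carrier H \<longrightarrow>
        (\<forall>s\<in>S. \<forall>t\<in>S. (f s \<otimes>\<^bsub>H\<^esub> f t) [^]\<^bsub>H\<^esub> group.ord G (s \<otimes>\<^bsub>G\<^esub> t) = \<one>\<^bsub>H\<^esub>) \<longrightarrow>
        (\<exists>h \<in> hom G H. \<forall>s\<in>S. h s = f s))"

definition cox_len :: "('a, 'b) monoid_scheme \<Rightarrow> 'a set \<Rightarrow> 'a \<Rightarrow> nat" where
  "cox_len G S w = (LEAST n. \<exists>ws. set ws \<subseteq> S \<and> length ws = n \<and> word_prod G ws = w)"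

definition reduced_word :: "('a, 'b) monoid_scheme \<Rightarrow> 'a set \<Rightarrow> 'a list \<Rightarrow> bool" where
  "reduced_word G S ws \<longleftrightarrow> set ws \<subseteq> S \<and> length ws = cox_len G S (word_prod G ws)"

definition supp :: "('a, 'b) monoid_scheme \<Rightarrow> 'a set \<Rightarrow> 'a \<Rightarrow> 'a set" where
  "supp G S w = {s. \<exists>ws. reduced_word G S ws \<and> word_prod G ws = w \<and> s \<in> set ws}"

definition Des :: "('a, 'b) monoid_scheme \<Rightarrow> 'a set \<Rightarrow> 'a \<Rightarrow> 'a set" where
  "Des G S w = {s\<in>S. cox_len G S (w \<otimes>\<^bsub>G\<^esub> s) < cox_len G S w}"

definition min_reps :: "('a, 'b) monoid_scheme \<Rightarrow> 'a set \<Rightarrow> 'a set \<Rightarrow> 'a set" where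
  "min_reps G S I = {x \<in> carrier G. \<forall>s\<in>I. cox_len G S (x \<otimes>\<^bsub>G\<^esub> s) > cox_len G S x}"

text \<open>Parabolic components w = w^I w_I with w^I in X_I and w_I in W_I = generate G I.\<close>
definition par_comp :: "('a, 'b) monoid_scheme \<Rightarrow> 'a set \<Rightarrow> 'a set \<Rightarrow> 'a \<Rightarrow> 'a" where
  "par_comp G S I w = (THE y. y \<in> generate G I \<and>
      w \<otimes>\<^bsub>G\<^esub> inv\<^bsub>G\<^esub> y \<in> min_reps G S I)"

definition min_comp :: "('a, 'b) monoid_scheme \<Rightarrow> 'a set \<Rightarrow> 'a set \<Rightarrow> 'a \<Rightarrow> 'a" where
  "min_comp G S I w = w \<otimes>\<^bsub>G\<^esub> inv\<^bsub>G\<^esub> (par_comp G S I w)"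

definition cox_le :: "('a, 'b) monoid_scheme \<Rightarrow> 'a set \<Rightarrow> 'a \<Rightarrow> 'a \<Rightarrow> bool" where
  "cox_le G S u v \<longleftrightarrow> u \<in> carrier G \<and> v \<in> carrier G \<and> par_comp G S (supp G S u) v = u"

definition cox_interval :: "('a, 'b) monoid_scheme \<Rightarrow> 'a set \<Rightarrow> 'a \<Rightarrow> 'a \<Rightarrow> 'a set" where
  "cox_interval G S u v = {w. cox_le G S u w \<and> cox_le G S w v}"

definition int_join :: "('a, 'b) monoid_scheme \<Rightarrow> 'a set \<Rightarrow> 'a \<Rightarrow> 'a \<Rightarrow> 'a \<Rightarrow> 'a \<Rightarrow> 'a" where
  "int_join G S u v x y = (THE z. z \<in> cox_interval G S u v \<and> cox_le G S x z \<and> cox_le G S y z \<and>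
     (\<forall>z'\<in>cox_interval G S u v. cox_le G S x z' \<and> cox_le G S y z' \<longrightarrow> cox_le G S z z'))"

definition int_meet :: "('a, 'b) monoid_scheme \<Rightarrow> 'a set \<Rightarrow> 'a \<Rightarrow> 'a \<Rightarrow> 'a \<Rightarrow> 'a \<Rightarrow> 'a" where
  "int_meet G S u v x y = (THE z. z \<in> cox_interval G S u v \<and> cox_le G S z x \<and> cox_le G S z y \<and>
     (\<forall>z'\<in>cox_interval G S u v. cox_le G S z' x \<and> cox_le G S z' y \<longrightarrow> cox_le G S z' z))"

end

theory Submission
  imports Defs "HOL-Library.Countable_Set"
begin

text \<open>Everything rests on the parabolic factorisation \<open>w = w\<^sup>K w\<^sub>K\<close> and two of its consequences:
  \<open>(w\<^sub>K)\<^sub>L = w\<^bsub>K \<inter> L\<^esub>\<close>, and \<open>x \<in> X\<^sub>K\<close> iff \<open>K \<inter> Des(x) = {}\<close>. Both need the length additivity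
  \<open>l(x y) = l(x) + l(y)\<close> for \<open>x \<in> X\<^sub>K\<close>, \<open>y \<in> W\<^sub>K\<close>, which follows from the exchange condition.
  The exchange condition is obtained from the presentation by Tits' argument: W acts on pairs
  (reflection, sign), a word flipping the sign of t once for every occurrence of t in its sequence
  of reflections. Hence the parity of that number depends only on the element, and an odd count for
  a simple reflection s yields a deletion, i.e. \<open>l(w s) < l(w)\<close>.

  Consequently, for \<open>w \<le> v\<close> one has \<open>w \<le> v\<^sub>K\<close> iff \<open>S(w) \<subseteq> K\<close>. On \<open>[u, v]\<close> the order is therefore
  inclusion of supports, the join of w and g is \<open>v\<^bsub>S(w) \<union> S(g)\<^esub>\<close> and the meet of \<open>v\<^sub>K\<close> and
  \<open>v\<^sub>L\<close> is \<open>v\<^bsub>K \<inter> L\<^esub>\<close>. Finally \<open>v\<^sub>K = w\<close> iff \<open>S(w) \<subseteq> K\<close> and \<open>K \<inter> Des(v\<^bsup>S(w)\<^esup>) = {}\<close>, so the fibre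
  of \<open>G\<^sub>v\<close> over w is the interval from \<open>S(w)\<close> to \<open>J - Des(v\<^bsup>S(w)\<^esup>)\<close>.\<close>

locale coxeter =
  fixes G :: "('a, 'b) monoid_scheme" (structure) and S :: "'a set"
  assumes coxeter_system: "coxeter_system G S"

sublocale coxeter \<subseteq> group G
  using coxeter_system by (simp add: coxeter_system_def)

context coxeter
begin

abbreviation wprod :: "'a list \<Rightarrow> 'a" where "wprod \<equiv> word_prod G"
abbreviation len :: "'a \<Rightarrow> nat" where "len \<equiv> cox_len G S"
abbreviation W :: "'a set \<Rightarrow> 'a set" where "W K \<equiv> generate G K"
abbreviation cox_le_syntax :: "'a \<Rightarrow> 'a \<Rightarrow> bool" (infix \<open>\<preceq>\<close> 50)
  where "u \<preceq> v \<equiv> cox_le G S u v"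

lemma finite_S: "finite S"
  using coxeter_system by (simp add: coxeter_system_def)

lemma simple_closed: "s \<in> S \<Longrightarrow> s \<in> carrier G"
  using coxeter_system by (auto simp: coxeter_system_def)

lemma one_notin_S: "\<one> \<notin> S"
  using coxeter_system by (simp add: coxeter_system_def)

lemma simple_mult_self: "s \<in> S \<Longrightarrow> s \<otimes> s = \<one>"
  using coxeter_system by (simp add: coxeter_system_def)

lemma generate_S: "W S = carrier G"
  using coxeter_system by (simp add: coxeter_system_def)

lemma universal_property:
  "group (H :: nat monoid) \<Longrightarrow> f \<in> S \<rightarrow> carrier H \<Longrightarrow>
   (\<forall>s\<in>S. \<forall>t\<in>S. (f s \<otimes>\<^bsub>H\<^esub> f t) [^]\<^bsub>H\<^esub> ord (s \<otimes> t) = \<one>\<^bsub>H\<^esub>) \<Longrightarrow>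
   \<exists>h \<in> hom G H. \<forall>s\<in>S. h s = f s"
  using coxeter_system unfolding coxeter_system_def by blast

lemma inv_simple: "s \<in> S \<Longrightarrow> inv s = s"
  using simple_mult_self simple_closed inv_char by blast

lemma inv_mult_cancel_left [simp]: "x \<in> carrier G \<Longrightarrow> y \<in> carrier G \<Longrightarrow> inv x \<otimes> (x \<otimes> y) = y"
  by (simp flip: m_assoc)

lemma mult_inv_cancel_left [simp]: "x \<in> carrier G \<Longrightarrow> y \<in> carrier G \<Longrightarrow> x \<otimes> (inv x \<otimes> y) = y"
  by (simp flip: m_assoc)

lemma simple_mult_cancel_left [simp]: "s \<in> S \<Longrightarrow> y \<in> carrier G \<Longrightarrow> s \<otimes> (s \<otimes> y) = y"
  using simple_mult_self simple_closed by (simp flip: m_assoc)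

lemma mult_simple_cancel_right: "s \<in> S \<Longrightarrow> x \<in> carrier G \<Longrightarrow> x \<otimes> s \<otimes> s = x"
  using simple_mult_self simple_closed by (simp add: m_assoc)

lemma wprod_Nil [simp]: "wprod [] = \<one>"
  by (simp add: word_prod_def)

lemma wprod_Cons [simp]: "wprod (a # ws) = a \<otimes> wprod ws"
  by (simp add: word_prod_def)

lemma wprod_closed [simp]: "set ws \<subseteq> S \<Longrightarrow> wprod ws \<in> carrier G"
  by (induction ws) (auto simp: simple_closed)

lemma wprod_append: "set xs \<subseteq> S \<Longrightarrow> set ys \<subseteq> S \<Longrightarrow> wprod (xs @ ys) = wprod xs \<otimes> wprod ys"
  by (induction xs) (auto simp: m_assoc simple_closed)

lemma wprod_snoc: "set xs \<subseteq> S \<Longrightarrow> s \<in> S \<Longrightarrow> wprod (xs @ [s]) = wprod xs \<otimes> s"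
  using wprod_append[of xs "[s]"] simple_closed by simp

lemma generate_eq_wprods: "K \<subseteq> S \<Longrightarrow> W K = {wprod ws | ws. set ws \<subseteq> K}"
proof
  assume K: "K \<subseteq> S"
  show "W K \<subseteq> {wprod ws | ws. set ws \<subseteq> K}"
  proof
    fix x assume "x \<in> W K"
    then show "x \<in> {wprod ws | ws. set ws \<subseteq> K}"
    proof induction
      case one
      show ?case by (intro CollectI exI[of _ "[]"]) simp
    next
      case (incl h)
      then show ?case using K simple_closed by (intro CollectI exI[of _ "[h]"]) auto
    next
      case (inv h)
      then show ?case using K simple_closed inv_simple by (intro CollectI exI[of _ "[h]"]) auto
    next
      case (eng h1 h2)
      then obtain xs ys where "set xs \<subseteq> K" "set ys \<subseteq> K" "h1 = wprod xs" "h2 = wprod ys"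
        by blast
      then show ?case using K by (intro CollectI exI[of _ "xs @ ys"]) (auto simp: wprod_append)
    qed
  qed
next
  show "{wprod ws | ws. set ws \<subseteq> K} \<subseteq> W K"
  proof clarify
    fix ws assume "set ws \<subseteq> K"
    then show "wprod ws \<in> W K"
      by (induction ws) (auto intro: generate.intros)
  qed
qed

lemma wprod_in_generate: "K \<subseteq> S \<Longrightarrow> set ws \<subseteq> K \<Longrightarrow> wprod ws \<in> W K"
  using generate_eq_wprods by blast

lemma wordE:
  assumes "w \<in> carrier G"
  obtains ws where "set ws \<subseteq> S" "wprod ws = w"
  using generate_eq_wprods[of S] generate_S assms by auto

lemma reduced_wordE:
  assumes "w \<in> carrier G"
  obtains ws where "set ws \<subseteq> S" "length ws = len w" "wprod ws = w"
proof -
  obtain ws where "set ws \<subseteq> S" "wprod ws = w"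
    using wordE assms by blast
  then have "\<exists>n ws. set ws \<subseteq> S \<and> length ws = n \<and> wprod ws = w"
    by blast
  then have "\<exists>ws. set ws \<subseteq> S \<and> length ws = len w \<and> wprod ws = w"
    unfolding cox_len_def by (rule LeastI_ex)
  then show ?thesis
    using that by blast
qed

lemma cox_len_le_length: "set ws \<subseteq> S \<Longrightarrow> len (wprod ws) \<le> length ws"
  unfolding cox_len_def by (rule Least_le) blast

lemma cox_len_one [simp]: "len \<one> = 0"
  using cox_len_le_length[of "[]"] by simp

lemma cox_len_eq_0: "w \<in> carrier G \<Longrightarrow> len w = 0 \<Longrightarrow> w = \<one>"
  by (metis length_0_conv reduced_wordE wprod_Nil)

lemma cox_len_simple: "s \<in> S \<Longrightarrow> len s = 1"
proof -
  assume s: "s \<in> S"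
  have "len s \<le> 1"
    using cox_len_le_length[of "[s]"] s simple_closed by simp
  moreover have "len s \<noteq> 0"
    using cox_len_eq_0[of s] s simple_closed one_notin_S by auto
  ultimately show ?thesis by simp
qed

lemma cox_len_mult_simple_le:
  assumes "w \<in> carrier G" "s \<in> S"
  shows "len (w \<otimes> s) \<le> len w + 1"
proof -
  obtain ws where ws: "set ws \<subseteq> S" "length ws = len w" "wprod ws = w"
    using reduced_wordE assms(1) by blast
  then show ?thesis
    using cox_len_le_length[of "ws @ [s]"] wprod_snoc[of ws s] assms by simp
qed

lemma cox_len_le_mult_simple:
  assumes "w \<in> carrier G" "s \<in> S"
  shows "len w \<le> len (w \<otimes> s) + 1"
  using cox_len_mult_simple_le[of "w \<otimes> s" s] mult_simple_cancel_right assms simple_closed by simp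

definition conjugate :: "'a \<Rightarrow> 'a \<Rightarrow> 'a" where
  "conjugate c y = inv c \<otimes> y \<otimes> c"

fun refl_seq :: "'a list \<Rightarrow> 'a list" where
  "refl_seq [] = []"
| "refl_seq (a # ws) = conjugate (wprod ws) a # refl_seq ws"

lemma refl_seq_closed: "set ws \<subseteq> S \<Longrightarrow> set (refl_seq ws) \<subseteq> carrier G"
  by (induction ws) (auto simp: conjugate_def simple_closed)

lemma refl_seq_append:
  assumes "set xs \<subseteq> S" "set ys \<subseteq> S"
  shows "refl_seq (xs @ ys) = map (conjugate (wprod ys)) (refl_seq xs) @ refl_seq ys"
  using assms(1)
proof (induction xs)
  case (Cons a xs)
  then have "a \<in> carrier G" "wprod xs \<in> carrier G" "wprod ys \<in> carrier G"
    using assms(2) simple_closed by auto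
  then have "conjugate (wprod (xs @ ys)) a = conjugate (wprod ys) (conjugate (wprod xs) a)"
    using Cons assms(2) by (simp add: wprod_append conjugate_def inv_mult_group m_assoc)
  then show ?case using Cons by simp
qed simp

lemma refl_seq_snoc:
  "set ws \<subseteq> S \<Longrightarrow> s \<in> S \<Longrightarrow> refl_seq (ws @ [s]) = map (conjugate s) (refl_seq ws) @ [s]"
  using refl_seq_append[of ws "[s]"] simple_closed by (simp add: conjugate_def)

lemma count_map_conjugate:
  assumes "set l \<subseteq> carrier G" "c \<in> carrier G" "x \<in> carrier G"
  shows "count_list (map (conjugate c) l) x = count_list l (c \<otimes> x \<otimes> inv c)"
  using assms(1)
proof (induction l)
  case (Cons a l)
  have "conjugate c a = x \<longleftrightarrow> a = c \<otimes> x \<otimes> inv c"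
  proof
    assume "conjugate c a = x"
    then show "a = c \<otimes> x \<otimes> inv c"
      using Cons assms by (auto simp: conjugate_def m_assoc)
  next
    assume "a = c \<otimes> x \<otimes> inv c"
    then show "conjugate c a = x"
      using Cons assms by (simp add: conjugate_def m_assoc)
  qed
  then show ?case using Cons by auto
qed simp

lemma count_refl_seq_snoc:
  assumes "set ws \<subseteq> S" "s \<in> S"
  shows "count_list (refl_seq (ws @ [s])) s = count_list (refl_seq ws) s + 1"
proof -
  have "count_list (map (conjugate s) (refl_seq ws)) s = count_list (refl_seq ws) (s \<otimes> s \<otimes> inv s)"
    using count_map_conjugate refl_seq_closed assms simple_closed by simp
  also have "s \<otimes> s \<otimes> inv s = s"
    using assms simple_closed simple_mult_self inv_simple by simp
  finally show ?thesis
    using refl_seq_snoc assms by simp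
qed

definition del_nth :: "nat \<Rightarrow> 'a list \<Rightarrow> 'a list" where
  "del_nth j ws = take j ws @ drop (Suc j) ws"

lemma set_del_nth_subset: "set (del_nth j ws) \<subseteq> set ws"
  unfolding del_nth_def by (metis Un_least set_append set_drop_subset set_take_subset)

lemma length_del_nth: "j < length ws \<Longrightarrow> length (del_nth j ws) = length ws - 1"
  unfolding del_nth_def by simp

lemma del_nth_append_left: "j < length xs \<Longrightarrow> del_nth j (xs @ ys) = del_nth j xs @ ys"
  by (simp add: del_nth_def)

lemma del_nth_append_right:
  "length xs \<le> j \<Longrightarrow> del_nth j (xs @ ys) = xs @ del_nth (j - length xs) ys"
  by (simp add: del_nth_def Suc_diff_le)

lemma mult_refl_seq_del_nth:
  "set ws \<subseteq> S \<Longrightarrow> t \<in> set (refl_seq ws) \<Longrightarrow>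
   \<exists>j < length ws. wprod ws \<otimes> t = wprod (del_nth j ws)"
proof (induction ws)
  case (Cons a ws)
  have a: "a \<in> S" and ws: "set ws \<subseteq> S"
    using Cons.prems by auto
  show ?case
  proof (cases "t = conjugate (wprod ws) a")
    case True
    then have "wprod (a # ws) \<otimes> t = wprod ws"
      using a ws simple_closed by (simp add: conjugate_def m_assoc flip: m_assoc[of a a])
    then show ?thesis
      by (intro exI[of _ 0]) (simp add: del_nth_def)
  next
    case False
    then have t: "t \<in> set (refl_seq ws)"
      using Cons.prems by simp
    then obtain j where j: "j < length ws" "wprod ws \<otimes> t = wprod (del_nth j ws)"
      using Cons.IH ws by blast
    have "t \<in> carrier G"
      using refl_seq_closed ws t by blast
    then have "wprod (a # ws) \<otimes> t = a \<otimes> wprod (del_nth j ws)"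
      using j a ws simple_closed by (simp add: m_assoc)
    then show ?thesis
      using j by (intro exI[of _ "Suc j"]) (simp add: del_nth_def)
  qed
qed simp

section \<open>The Tits action and the exchange condition\<close>

definition alt_word :: "'a \<Rightarrow> 'a \<Rightarrow> nat \<Rightarrow> 'a list" where
  "alt_word s t k = concat (replicate k [s, t])"

lemma alt_word_Suc: "alt_word s t (Suc k) = alt_word s t k @ [s, t]"
  by (simp add: alt_word_def replicate_append_same[symmetric])

lemma set_alt_word: "s \<in> S \<Longrightarrow> t \<in> S \<Longrightarrow> set (alt_word s t k) \<subseteq> S"
  by (induction k) (auto simp: alt_word_Suc, simp add: alt_word_def)

lemma wprod_alt_word: "s \<in> S \<Longrightarrow> t \<in> S \<Longrightarrow> wprod (alt_word s t k) = (s \<otimes> t) [^] k"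
proof (induction k)
  case 0
  then show ?case by (simp add: alt_word_def)
next
  case (Suc k)
  then show ?case
    using set_alt_word[OF Suc.prems, of k] simple_closed
    by (simp add: alt_word_Suc wprod_append m_assoc)
qed

lemma conjugate_dihedral:
  fixes j :: nat
  assumes "s \<in> S" "t \<in> S"
  shows "conjugate (s \<otimes> t) (t \<otimes> (s \<otimes> t) [^] j) = t \<otimes> (s \<otimes> t) [^] (j + 2)"
proof -
  have s: "s \<in> carrier G" and t: "t \<in> carrier G"
    using assms simple_closed by auto
  then have c: "s \<otimes> t \<in> carrier G"
    by simp
  have "inv (s \<otimes> t) = t \<otimes> s"
    using assms s t inv_simple by (simp add: inv_mult_group)
  moreover have "(s \<otimes> t) [^] Suc (Suc j) = s \<otimes> t \<otimes> (s \<otimes> t) [^] j \<otimes> (s \<otimes> t)"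
    by (simp only: nat_pow_Suc[of "s \<otimes> t" "Suc j"] nat_pow_Suc2[OF c, of j])
  ultimately show ?thesis
    using s t by (simp add: conjugate_def m_assoc)
qed

lemma refl_seq_alt_word:
  assumes "s \<in> S" "t \<in> S"
  shows "refl_seq (alt_word s t k) = map (\<lambda>j. t \<otimes> (s \<otimes> t) [^] j) (rev [0..<2 * k])"
proof (induction k)
  case 0
  then show ?case by (simp add: alt_word_def)
next
  case (Suc k)
  define f where "f = (\<lambda>j::nat. t \<otimes> (s \<otimes> t) [^] j)"
  have s: "s \<in> carrier G" and t: "t \<in> carrier G"
    using assms simple_closed by auto
  have shift: "map (conjugate (s \<otimes> t)) (map f xs) = map f (map (\<lambda>j. j + 2) xs)" for xs
    using conjugate_dihedral[OF assms] by (induction xs) (simp_all add: f_def)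
  have "refl_seq (alt_word s t (Suc k)) =
      map (conjugate (s \<otimes> t)) (refl_seq (alt_word s t k)) @ refl_seq [s, t]"
    using refl_seq_append[OF set_alt_word[OF assms, of k], of "[s, t]"] assms s t
    by (simp add: alt_word_Suc)
  also have "refl_seq [s, t] = [f 1, f 0]"
    using assms s t inv_simple by (simp add: f_def conjugate_def m_assoc)
  also have "map (conjugate (s \<otimes> t)) (refl_seq (alt_word s t k)) =
      map f (map (\<lambda>j. j + 2) (rev [0..<2 * k]))"
    unfolding Suc f_def[symmetric] by (rule shift)
  also have "map (\<lambda>j. j + 2) (rev [0..<2 * k]) = rev [2..<2 * k + 2]"
    by (simp only: rev_map[symmetric] map_add_upt)
  also have "map f (rev [2..<2 * k + 2]) @ [f 1, f 0] = map f (rev [0..<2 * Suc k])"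
    using upt_add_eq_append[of 0 2 "2 * k"] by (simp add: add.commute numeral_2_eq_2)
  finally show ?case
    unfolding f_def .
qed

definition tits_domain :: "('a \<times> bool) set" where
  "tits_domain = carrier G \<times> UNIV"

definition tits_action :: "'a list \<Rightarrow> 'a \<times> bool \<Rightarrow> 'a \<times> bool" where
  "tits_action ws = (\<lambda>p \<in> tits_domain.
     (wprod ws \<otimes> fst p \<otimes> inv (wprod ws), snd p \<noteq> odd (count_list (refl_seq ws) (fst p))))"

lemma tits_action_closed: "set ws \<subseteq> S \<Longrightarrow> p \<in> tits_domain \<Longrightarrow> tits_action ws p \<in> tits_domain"
  by (auto simp: tits_action_def tits_domain_def)

lemma tits_action_append:
  assumes "set xs \<subseteq> S" "set ys \<subseteq> S"
  shows "tits_action (xs @ ys) = compose tits_domain (tits_action xs) (tits_action ys)"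
proof
  fix p
  show "tits_action (xs @ ys) p = compose tits_domain (tits_action xs) (tits_action ys) p"
  proof (cases "p \<in> tits_domain")
    case False
    then show ?thesis by (simp add: tits_action_def compose_def)
  next
    case True
    then obtain x b where p: "p = (x, b)" "x \<in> carrier G"
      by (auto simp: tits_domain_def)
    have "wprod xs \<in> carrier G" "wprod ys \<in> carrier G"
      using assms by auto
    moreover have "count_list (refl_seq (xs @ ys)) x =
        count_list (refl_seq xs) (wprod ys \<otimes> x \<otimes> inv (wprod ys)) + count_list (refl_seq ys) x"
      using refl_seq_append[OF assms] count_map_conjugate[of "refl_seq xs" "wprod ys" x]
        refl_seq_closed[of xs] assms p by simp
    ultimately show ?thesis
      using True p assms tits_action_closed[of ys p]
      by (auto simp: tits_action_def tits_domain_def compose_def wprod_append inv_mult_group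
          m_assoc)
  qed
qed

lemma tits_action_rev_append: "set ws \<subseteq> S \<Longrightarrow> tits_action (rev ws @ ws) = tits_action []"
proof (induction ws)
  case (Cons a ws)
  then have a: "a \<in> S" and ws: "set ws \<subseteq> S" by auto
  have "tits_action [a, a] = tits_action []"
    using a simple_closed simple_mult_self inv_simple
    by (auto simp: tits_action_def tits_domain_def conjugate_def m_assoc)
  then have "tits_action ([a, a] @ ws) = tits_action ws"
    using a ws tits_action_append[of "[a, a]" ws] tits_action_append[of "[]" ws] by simp
  then show ?case
    using Cons ws a tits_action_append[of "rev ws" "[a, a] @ ws"] tits_action_append[of "rev ws" ws]
    by simp
qed simp

lemma tits_action_alt_word_ord:
  assumes "s \<in> S" "t \<in> S"
  shows "tits_action (alt_word s t (ord (s \<otimes> t))) = tits_action []"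
proof -
  define c where "c = s \<otimes> t"
  define m where "m = ord c"
  define f where "f = (\<lambda>j::nat. t \<otimes> c [^] j)"
  have c: "c \<in> carrier G"
    using assms simple_closed c_def by simp
  have cm: "c [^] m = \<one>"
    using c m_def by simp
  have "f (i + m) = f i" for i
    using cm c by (simp add: f_def flip: nat_pow_mult)
  then have "map f [m..<m + m] = map f [0..<m]"
    by (simp only: map_add_upt[symmetric] map_map comp_def)
  then have "even (count_list (refl_seq (alt_word s t m)) x)" for x
    using refl_seq_alt_word[OF assms, of m] upt_add_eq_append[of 0 m m]
    by (simp add: f_def c_def mult_2 flip: rev_map)
  moreover have "wprod (alt_word s t m) = \<one>"
    using wprod_alt_word[OF assms] cm c_def by simp
  ultimately show ?thesis
    unfolding tits_action_def m_def c_def by (auto simp: tits_domain_def intro!: restrict_ext)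
qed

text \<open>The universal property of the presentation only speaks about groups on \<^typ>\<open>nat\<close>, so the
  countable group of all actions \<^term>\<open>tits_action ws\<close> is transported to \<^typ>\<open>nat\<close> along
  \<^const>\<open>to_nat_on\<close>.\<close>

definition tits_actions :: "('a \<times> bool \<Rightarrow> 'a \<times> bool) set" where
  "tits_actions = tits_action ` {ws. set ws \<subseteq> S}"

definition tits_code :: "('a \<times> bool \<Rightarrow> 'a \<times> bool) \<Rightarrow> nat" where
  "tits_code = to_nat_on tits_actions"

definition tits_group :: "nat monoid" where
  "tits_group = \<lparr>carrier = tits_code ` tits_actions,
     mult = (\<lambda>a b. tits_code
        (compose tits_domain (from_nat_into tits_actions a) (from_nat_into tits_actions b))),
     one = tits_code (tits_action [])\<rparr>"

lemma countable_tits_actions: "countable tits_actions"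
proof -
  have "{ws. set ws \<subseteq> S} = lists S"
    by auto
  then show ?thesis
    unfolding tits_actions_def using finite_S
    by (metis countable_finite countable_image countable_lists)
qed

lemma tits_decode_code [simp]:
  "set ws \<subseteq> S \<Longrightarrow> from_nat_into tits_actions (tits_code (tits_action ws)) = tits_action ws"
  unfolding tits_code_def using countable_tits_actions by (simp add: tits_actions_def)

lemma tits_group_mult:
  "set xs \<subseteq> S \<Longrightarrow> set ys \<subseteq> S \<Longrightarrow>
   tits_code (tits_action xs) \<otimes>\<^bsub>tits_group\<^esub> tits_code (tits_action ys) =
     tits_code (tits_action (xs @ ys))"
  by (simp add: tits_group_def tits_action_append)

lemma carrier_tits_group: "carrier tits_group = {tits_code (tits_action ws) | ws. set ws \<subseteq> S}"
  by (auto simp: tits_group_def tits_actions_def)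

lemma one_tits_group: "\<one>\<^bsub>tits_group\<^esub> = tits_code (tits_action [])"
  by (simp add: tits_group_def)

lemma group_tits_group: "group tits_group"
proof (rule groupI)
  fix x y
  assume "x \<in> carrier tits_group" "y \<in> carrier tits_group"
  then obtain xs ys where "set xs \<subseteq> S" "set ys \<subseteq> S"
    and "x = tits_code (tits_action xs)" "y = tits_code (tits_action ys)"
    by (auto simp: carrier_tits_group)
  then show "x \<otimes>\<^bsub>tits_group\<^esub> y \<in> carrier tits_group"
    by (auto simp: tits_group_mult carrier_tits_group intro!: exI[of _ "xs @ ys"])
next
  show "\<one>\<^bsub>tits_group\<^esub> \<in> carrier tits_group"
    by (auto simp: one_tits_group carrier_tits_group)
next
  fix x y z
  assume "x \<in> carrier tits_group" "y \<in> carrier tits_group" "z \<in> carrier tits_group"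
  then show "x \<otimes>\<^bsub>tits_group\<^esub> y \<otimes>\<^bsub>tits_group\<^esub> z = x \<otimes>\<^bsub>tits_group\<^esub> (y \<otimes>\<^bsub>tits_group\<^esub> z)"
    by (auto simp: carrier_tits_group tits_group_mult)
next
  fix x
  assume "x \<in> carrier tits_group"
  then obtain xs where xs: "set xs \<subseteq> S" "x = tits_code (tits_action xs)"
    by (auto simp: carrier_tits_group)
  then show "\<one>\<^bsub>tits_group\<^esub> \<otimes>\<^bsub>tits_group\<^esub> x = x"
    using tits_group_mult[of "[]" xs] by (simp add: one_tits_group)
  have "tits_code (tits_action (rev xs)) \<otimes>\<^bsub>tits_group\<^esub> x = \<one>\<^bsub>tits_group\<^esub>"
    using xs tits_group_mult[of "rev xs" xs] tits_action_rev_append[of xs]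
    by (simp add: one_tits_group)
  moreover have "tits_code (tits_action (rev xs)) \<in> carrier tits_group"
    using xs by (auto simp: carrier_tits_group intro!: exI[of _ "rev xs"])
  ultimately show "\<exists>y\<in>carrier tits_group. y \<otimes>\<^bsub>tits_group\<^esub> x = \<one>\<^bsub>tits_group\<^esub>"
    by blast
qed

lemma tits_group_pow:
  "s \<in> S \<Longrightarrow> t \<in> S \<Longrightarrow>
   tits_code (tits_action [s, t]) [^]\<^bsub>tits_group\<^esub> (k::nat) =
     tits_code (tits_action (alt_word s t k))"
proof (induction k)
  case 0
  then show ?case by (simp add: one_tits_group alt_word_def)
next
  case (Suc k)
  then show ?case
    using tits_group_mult[of "alt_word s t k" "[s, t]"] set_alt_word[of s t k]
    by (simp add: alt_word_Suc)
qed

lemma tits_hom_exists: "\<exists>h \<in> hom G tits_group. \<forall>s\<in>S. h s = tits_code (tits_action [s])"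
proof (rule universal_property[OF group_tits_group])
  show "(\<lambda>s. tits_code (tits_action [s])) \<in> S \<rightarrow> carrier tits_group"
    by (auto simp: carrier_tits_group)
  show "\<forall>s\<in>S. \<forall>t\<in>S. (tits_code (tits_action [s]) \<otimes>\<^bsub>tits_group\<^esub> tits_code (tits_action [t]))
      [^]\<^bsub>tits_group\<^esub> ord (s \<otimes> t) = \<one>\<^bsub>tits_group\<^esub>"
    using tits_group_mult[of "[_]" "[_]"] tits_group_pow tits_action_alt_word_ord
    by (simp add: one_tits_group)
qed

lemma tits_action_wprod_eq:
  assumes "set xs \<subseteq> S" "set ys \<subseteq> S" "wprod xs = wprod ys"
  shows "tits_action xs = tits_action ys"
proof -
  obtain h where h: "h \<in> hom G tits_group" "\<forall>s\<in>S. h s = tits_code (tits_action [s])"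
    using tits_hom_exists by blast
  interpret group_hom G tits_group h
    using h group_tits_group is_group by (simp add: group_hom_def group_hom_axioms_def)
  have h_wprod: "h (wprod ws) = tits_code (tits_action ws)" if "set ws \<subseteq> S" for ws
    using that
  proof (induction ws)
    case Nil
    then show ?case by (simp add: one_tits_group)
  next
    case (Cons a ws)
    then have "h (wprod (a # ws)) =
        tits_code (tits_action [a]) \<otimes>\<^bsub>tits_group\<^esub> tits_code (tits_action ws)"
      using h simple_closed by simp
    then show ?case
      using tits_group_mult[of "[a]" ws] Cons.prems by simp
  qed
  have "tits_code (tits_action xs) = tits_code (tits_action ys)"
    using h_wprod assms by metis
  then show ?thesis
    using tits_decode_code assms(1,2) by metis
qed

lemma odd_count_refl_seq_eq:
  assumes "set xs \<subseteq> S" "set ys \<subseteq> S" "wprod xs = wprod ys" "x \<in> carrier G"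
  shows "odd (count_list (refl_seq xs) x) = odd (count_list (refl_seq ys) x)"
proof -
  have "tits_action xs (x, False) = tits_action ys (x, False)"
    using tits_action_wprod_eq[OF assms(1-3)] by simp
  then show ?thesis
    using assms(4) by (simp add: tits_action_def tits_domain_def)
qed

lemma descent_iff_odd_count:
  assumes ws: "set ws \<subseteq> S" and s: "s \<in> S"
  shows "len (wprod ws \<otimes> s) < len (wprod ws) \<longleftrightarrow> odd (count_list (refl_seq ws) s)"
proof -
  have descent: "len (wprod vs \<otimes> s) < len (wprod vs)"
    if vs: "set vs \<subseteq> S" and odd: "odd (count_list (refl_seq vs) s)" for vs
  proof -
    obtain rs where rs: "set rs \<subseteq> S" "length rs = len (wprod vs)" "wprod rs = wprod vs"
      using reduced_wordE[of "wprod vs"] vs by auto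
    have "odd (count_list (refl_seq rs) s)"
      using odd_count_refl_seq_eq[of vs rs s] vs rs odd s simple_closed by simp
    then have "s \<in> set (refl_seq rs)"
      by (metis count_notin odd_pos less_irrefl)
    then obtain j where j: "j < length rs" "wprod rs \<otimes> s = wprod (del_nth j rs)"
      using mult_refl_seq_del_nth[OF rs(1)] by blast
    have "len (wprod rs \<otimes> s) \<le> length (del_nth j rs)"
      using j cox_len_le_length[of "del_nth j rs"] set_del_nth_subset[of j rs] rs by auto
    then show ?thesis
      using j length_del_nth rs by simp
  qed
  show ?thesis
  proof
    assume less: "len (wprod ws \<otimes> s) < len (wprod ws)"
    show "odd (count_list (refl_seq ws) s)"
    proof (rule ccontr)
      assume "\<not> odd (count_list (refl_seq ws) s)"
      then have "odd (count_list (refl_seq (ws @ [s])) s)"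
        using count_refl_seq_snoc[OF ws s] by simp
      then have "len (wprod ws \<otimes> s \<otimes> s) < len (wprod ws \<otimes> s)"
        using descent[of "ws @ [s]"] ws s wprod_snoc by simp
      then show False
        using less ws s mult_simple_cancel_right by simp
    qed
  next
    assume "odd (count_list (refl_seq ws) s)"
    then show "len (wprod ws \<otimes> s) < len (wprod ws)"
      using descent ws by blast
  qed
qed

lemma cox_len_mult_simple_neq:
  assumes "w \<in> carrier G" "s \<in> S"
  shows "len (w \<otimes> s) \<noteq> len w"
proof
  assume eq: "len (w \<otimes> s) = len w"
  obtain ws where ws: "set ws \<subseteq> S" "wprod ws = w"
    using wordE assms by blast
  have "\<not> odd (count_list (refl_seq ws) s)"
    using descent_iff_odd_count[OF ws(1) assms(2)] ws eq by simp
  then have "odd (count_list (refl_seq (ws @ [s])) s)"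
    using count_refl_seq_snoc ws assms by simp
  then have "len (w \<otimes> s \<otimes> s) < len (w \<otimes> s)"
    using descent_iff_odd_count[of "ws @ [s]" s] wprod_snoc ws assms by simp
  then show False
    using eq assms mult_simple_cancel_right by simp
qed

lemma cox_len_mult_simple:
  assumes "w \<in> carrier G" "s \<in> S"
  shows "len (w \<otimes> s) = len w + 1 \<or> len (w \<otimes> s) + 1 = len w"
  using cox_len_mult_simple_neq[OF assms] cox_len_mult_simple_le[OF assms]
    cox_len_le_mult_simple[OF assms] by linarith

lemma exchange_condition:
  assumes "set ws \<subseteq> S" "s \<in> S" "len (wprod ws \<otimes> s) < len (wprod ws)"
  shows "\<exists>j < length ws. wprod ws \<otimes> s = wprod (del_nth j ws)"
  using assms descent_iff_odd_count[OF assms(1,2)] mult_refl_seq_del_nth[OF assms(1)]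
  by (metis count_notin odd_pos less_irrefl)

lemma parabolic_closed: "K \<subseteq> S \<Longrightarrow> x \<in> W K \<Longrightarrow> x \<in> carrier G"
  using generate_in_carrier simple_closed by blast

lemma subgroup_parabolic: "K \<subseteq> S \<Longrightarrow> subgroup (W K) G"
  using generate_is_subgroup simple_closed by blast

lemma parabolic_mult: "K \<subseteq> S \<Longrightarrow> x \<in> W K \<Longrightarrow> y \<in> W K \<Longrightarrow> x \<otimes> y \<in> W K"
  using subgroup.m_closed[OF subgroup_parabolic] by blast

lemma parabolic_inv: "K \<subseteq> S \<Longrightarrow> x \<in> W K \<Longrightarrow> inv x \<in> W K"
  using subgroup.m_inv_closed[OF subgroup_parabolic] by blast

lemma reduced_word_in_parabolicE:
  assumes K: "K \<subseteq> S" and x: "x \<in> W K"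
  obtains vs where "set vs \<subseteq> K" "wprod vs = x" "length vs = len x"
proof -
  have "\<exists>vs. set vs \<subseteq> K \<and> wprod vs = wprod ws \<and> length vs = len (wprod ws)" if "set ws \<subseteq> K" for ws
    using that
  proof (induction ws rule: rev_induct)
    case Nil
    then show ?case by (intro exI[of _ "[]"]) simp
  next
    case (snoc a ws)
    then have a: "a \<in> S" "a \<in> K" and ws: "set ws \<subseteq> S" "set ws \<subseteq> K"
      using K by auto
    obtain vs where vs: "set vs \<subseteq> K" "wprod vs = wprod ws" "length vs = len (wprod ws)"
      using snoc ws by blast
    have vsS: "set vs \<subseteq> S"
      using vs K by auto
    have e: "wprod (ws @ [a]) = wprod ws \<otimes> a"
      using wprod_snoc ws a by simp
    consider "len (wprod ws \<otimes> a) = len (wprod ws) + 1" | "len (wprod ws \<otimes> a) + 1 = len (wprod ws)"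
      using cox_len_mult_simple[of "wprod ws" a] ws a by auto
    then show ?case
    proof cases
      case 1
      then show ?thesis
        using vs a e wprod_snoc[OF vsS a(1)] by (intro exI[of _ "vs @ [a]"]) simp
    next
      case 2
      then obtain j where j: "j < length vs" "wprod vs \<otimes> a = wprod (del_nth j vs)"
        using exchange_condition[OF vsS a(1)] vs by auto
      then show ?thesis
        using vs e 2 set_del_nth_subset[of j vs] length_del_nth[of j vs]
        by (intro exI[of _ "del_nth j vs"]) auto
    qed
  qed
  then show ?thesis
    using that x generate_eq_wprods[OF K] by auto
qed

lemma simple_in_parabolic:
  assumes K: "K \<subseteq> S" and s: "s \<in> S" "s \<in> W K"
  shows "s \<in> K"
proof -
  obtain vs where vs: "set vs \<subseteq> K" "wprod vs = s" "length vs = len s"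
    using reduced_word_in_parabolicE[OF K s(2)] by blast
  then obtain k where "vs = [k]"
    using cox_len_simple[OF s(1)] by (metis One_nat_def length_0_conv length_Suc_conv)
  then show ?thesis
    using vs K simple_closed by auto
qed

text \<open>Peel off the last letter a: the exchange condition applied to a reduced K-word of the
  element shows \<open>a \<in> W K\<close>.\<close>

lemma reduced_word_in_parabolic:
  assumes K: "K \<subseteq> S"
  shows "set ws \<subseteq> S \<Longrightarrow> length ws = len (wprod ws) \<Longrightarrow> wprod ws \<in> W K \<Longrightarrow> set ws \<subseteq> K"
proof (induction ws rule: rev_induct)
  case (snoc a ws)
  define x where "x = wprod (ws @ [a])"
  have a: "a \<in> S" and ws: "set ws \<subseteq> S"
    using snoc by auto
  have x: "x = wprod ws \<otimes> a" "x \<in> carrier G" "x \<otimes> a = wprod ws"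
    using wprod_snoc ws a x_def mult_simple_cancel_right simple_closed by auto
  have len_x: "len x = length ws + 1"
    using snoc x_def by simp
  have len_ws: "len (wprod ws) \<le> length ws"
    using cox_len_le_length ws by blast
  have xK: "x \<in> W K"
    using snoc x_def by simp
  obtain vs where vs: "set vs \<subseteq> K" "wprod vs = x" "length vs = len x"
    using reduced_word_in_parabolicE[OF K xK] by blast
  then obtain j where j: "wprod vs \<otimes> a = wprod (del_nth j vs)"
    using exchange_condition[of vs a] a x len_x len_ws K by fastforce
  have "wprod (del_nth j vs) \<in> W K"
    using wprod_in_generate[OF K] set_del_nth_subset[of j vs] vs by blast
  moreover have "a = inv x \<otimes> wprod (del_nth j vs)"
    using inv_mult_cancel_left[OF x(2) simple_closed[OF a]] j vs(2) by simp
  ultimately have aK: "a \<in> W K"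
    using parabolic_mult[OF K parabolic_inv[OF K xK]] by simp
  then have "wprod ws \<in> W K"
    using x parabolic_mult[OF K xK] by metis
  moreover have "length ws = len (wprod ws)"
    using cox_len_mult_simple_le[of "wprod ws" a] x len_x len_ws ws a by simp
  ultimately show ?case
    using snoc.IH ws simple_in_parabolic[OF K a aK] by simp
qed simp

lemma supp_subset_S: "supp G S w \<subseteq> S"
  by (auto simp: supp_def reduced_word_def)

lemma in_generate_supp:
  assumes "w \<in> carrier G"
  shows "w \<in> W (supp G S w)"
proof -
  obtain ws where ws: "set ws \<subseteq> S" "length ws = len w" "wprod ws = w"
    using reduced_wordE assms by blast
  then have "set ws \<subseteq> supp G S w"
    by (auto simp: supp_def reduced_word_def)
  then show ?thesis
    using wprod_in_generate[OF supp_subset_S] ws by blast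
qed

lemma supp_subset_of_in_generate: "K \<subseteq> S \<Longrightarrow> w \<in> W K \<Longrightarrow> supp G S w \<subseteq> K"
  using reduced_word_in_parabolic by (auto simp: supp_def reduced_word_def)

section \<open>Minimal coset representatives\<close>

definition coset_minimal :: "'a set \<Rightarrow> 'a \<Rightarrow> bool" where
  "coset_minimal K u \<longleftrightarrow> u \<in> carrier G \<and> (\<forall>y \<in> W K. len u \<le> len (u \<otimes> y))"

lemma coset_minimal_exists:
  assumes K: "K \<subseteq> S" and w: "w \<in> carrier G"
  obtains u y where "coset_minimal K u" "y \<in> W K" "w = u \<otimes> y"
proof -
  obtain y0 where y0: "y0 \<in> W K" "\<forall>y \<in> W K. len (w \<otimes> y0) \<le> len (w \<otimes> y)"
    using ex_has_least_nat[of "\<lambda>y. y \<in> W K" \<one> "\<lambda>y. len (w \<otimes> y)"] generate.one by blast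
  have y0c: "y0 \<in> carrier G"
    using parabolic_closed[OF K y0(1)] .
  have "coset_minimal K (w \<otimes> y0)"
    unfolding coset_minimal_def
  proof (intro conjI ballI)
    show "w \<otimes> y0 \<in> carrier G"
      using w y0c by simp
    fix y
    assume y: "y \<in> W K"
    then have "w \<otimes> y0 \<otimes> y = w \<otimes> (y0 \<otimes> y)"
      using w y0c parabolic_closed[OF K] by (simp add: m_assoc)
    then show "len (w \<otimes> y0) \<le> len (w \<otimes> y0 \<otimes> y)"
      using y0 parabolic_mult[OF K y0(1) y] by simp
  qed
  moreover have "w = w \<otimes> y0 \<otimes> inv y0"
    using w y0c by (simp add: m_assoc)
  ultimately show ?thesis
    using that parabolic_inv[OF K y0(1)] by blast
qed

text \<open>The inductive step of length additivity: if a descent occurred, the exchange condition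
  applied to a reduced word of u followed by vs would either shorten u within its coset or
  shorten the reduced word vs a.\<close>

lemma coset_minimal_mult_ascent:
  assumes K: "K \<subseteq> S" and u: "coset_minimal K u" and vs: "set vs \<subseteq> K" and a: "a \<in> K"
    and add: "len (u \<otimes> wprod vs) = len u + length vs"
    and red: "len (wprod vs \<otimes> a) = length vs + 1"
  shows "len (u \<otimes> wprod vs) < len (u \<otimes> wprod vs \<otimes> a)"
proof (rule ccontr)
  define z where "z = wprod vs"
  have uc: "u \<in> carrier G" and aS: "a \<in> S" and vsS: "set vs \<subseteq> S" and zc: "z \<in> carrier G"
    using u vs a K by (auto simp: coset_minimal_def z_def)
  assume "\<not> len (u \<otimes> wprod vs) < len (u \<otimes> wprod vs \<otimes> a)"
  then have desc: "len (u \<otimes> z \<otimes> a) < len (u \<otimes> z)"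
    using cox_len_mult_simple[of "u \<otimes> z" a] uc zc aS z_def by auto
  obtain us where us: "set us \<subseteq> S" "length us = len u" "wprod us = u"
    using reduced_wordE uc by blast
  have "wprod (us @ vs) = u \<otimes> z"
    using wprod_append us vsS z_def by simp
  then obtain j where j: "j < length (us @ vs)" "u \<otimes> z \<otimes> a = wprod (del_nth j (us @ vs))"
    using exchange_condition[of "us @ vs" a] us vsS aS desc by auto
  show False
  proof (cases "j < length us")
    case True
    define u' where "u' = wprod (del_nth j us)"
    have dS: "set (del_nth j us) \<subseteq> S"
      using set_del_nth_subset us by blast
    have u'c: "u' \<in> carrier G"
      using dS u'_def by simp
    have "u \<otimes> z \<otimes> a = u' \<otimes> z"
      using j True del_nth_append_left wprod_append dS vsS u'_def z_def by simp
    then have "u' = u \<otimes> z \<otimes> a \<otimes> inv z"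
      using u'c zc by (simp add: m_assoc)
    also have "\<dots> = u \<otimes> (z \<otimes> a \<otimes> inv z)"
      using uc zc aS simple_closed by (simp add: m_assoc)
    finally have "u' = u \<otimes> (z \<otimes> a \<otimes> inv z)" .
    moreover have "z \<otimes> a \<otimes> inv z \<in> W K"
      using parabolic_mult[OF K parabolic_mult[OF K _ generate.incl[OF a]] parabolic_inv[OF K]]
        wprod_in_generate[OF K vs] z_def by blast
    ultimately have "len u \<le> len u'"
      using u unfolding coset_minimal_def by blast
    moreover have "len u' \<le> length us - 1"
      using cox_len_le_length[OF dS] length_del_nth True u'_def by simp
    ultimately show False
      using True us by simp
  next
    case False
    define k where "k = j - length us"
    have dS: "set (del_nth k vs) \<subseteq> S"
      using set_del_nth_subset vsS by blast
    have "u \<otimes> z \<otimes> a = u \<otimes> wprod (del_nth k vs)"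
      using j False del_nth_append_right wprod_append dS us k_def by simp
    then have "z \<otimes> a = wprod (del_nth k vs)"
      using uc zc aS simple_closed dS by (simp add: m_assoc)
    then show False
      using cox_len_le_length[OF dS] length_del_nth[of k vs] j False k_def red z_def by simp
  qed
qed

lemma coset_minimal_length_add:
  assumes K: "K \<subseteq> S" and u: "coset_minimal K u" and y: "y \<in> W K"
  shows "len (u \<otimes> y) = len u + len y"
proof -
  have uc: "u \<in> carrier G"
    using u by (simp add: coset_minimal_def)
  have "len (u \<otimes> wprod vs) = len u + length vs"
    if "set vs \<subseteq> K" "length vs = len (wprod vs)" for vs
    using that
  proof (induction vs rule: rev_induct)
    case (snoc a vs)
    have a: "a \<in> K" "a \<in> S" and vs: "set vs \<subseteq> K" "set vs \<subseteq> S"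
      using snoc.prems K by auto
    have red: "len (wprod vs \<otimes> a) = length vs + 1"
      using snoc.prems wprod_snoc vs a by simp
    have "length vs = len (wprod vs)"
      using red cox_len_le_length[OF vs(2)] cox_len_mult_simple_le[of "wprod vs" a] vs a by simp
    then have add: "len (u \<otimes> wprod vs) = len u + length vs"
      using snoc.IH vs by simp
    then have "len (u \<otimes> wprod vs \<otimes> a) = len (u \<otimes> wprod vs) + 1"
      using coset_minimal_mult_ascent[OF K u vs(1) a(1) add red]
        cox_len_mult_simple_le[of "u \<otimes> wprod vs" a] uc vs a by simp
    then show ?case
      using add wprod_snoc vs a uc simple_closed by (simp add: m_assoc)
  qed (simp add: uc)
  then show ?thesis
    using reduced_word_in_parabolicE[OF K y] by metis
qed

lemma coset_minimal_in_min_reps: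
  assumes K: "K \<subseteq> S" and u: "coset_minimal K u"
  shows "u \<in> min_reps G S K"
proof -
  have uc: "u \<in> carrier G"
    using u by (simp add: coset_minimal_def)
  have "len u < len (u \<otimes> s)" if s: "s \<in> K" for s
    using u generate.incl[OF s] cox_len_mult_simple_neq[OF uc, of s] s K
    unfolding coset_minimal_def by fastforce
  then show ?thesis
    using uc unfolding min_reps_def by blast
qed

lemma min_reps_closed: "x \<in> min_reps G S K \<Longrightarrow> x \<in> carrier G"
  unfolding min_reps_def by blast

lemma min_reps_eq_coset_minimal:
  assumes K: "K \<subseteq> S" and u: "coset_minimal K u" and x: "x \<in> min_reps G S K"
    and z: "z \<in> W K" and xz: "x = u \<otimes> z"
  shows "x = u"
proof (cases "z = \<one>")
  case True
  then show ?thesis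
    using xz u by (simp add: coset_minimal_def)
next
  case False
  have uc: "u \<in> carrier G" and zc: "z \<in> carrier G"
    using u parabolic_closed[OF K z] by (auto simp: coset_minimal_def)
  obtain vs where vs: "set vs \<subseteq> K" "wprod vs = z" "length vs = len z"
    using reduced_word_in_parabolicE[OF K z] by blast
  then obtain vs' a where va: "vs = vs' @ [a]"
    using False by (metis rev_exhaust wprod_Nil)
  have a: "a \<in> K" "a \<in> S" and vs': "set vs' \<subseteq> K" "set vs' \<subseteq> S"
    using vs va K by auto
  have "z = wprod vs' \<otimes> a"
    using vs va wprod_snoc vs' a by simp
  then have za: "z \<otimes> a = wprod vs'"
    using mult_simple_cancel_right[OF a(2)] vs' by simp
  have "len (x \<otimes> a) = len u + len (z \<otimes> a)"
    using coset_minimal_length_add[OF K u] wprod_in_generate[OF K vs'(1)] za xz uc zc a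
      simple_closed
    by (simp add: m_assoc)
  moreover have "len (z \<otimes> a) < len z"
    using za cox_len_le_length[OF vs'(2)] vs va by simp
  moreover have "len x = len u + len z"
    using coset_minimal_length_add[OF K u z] xz by simp
  moreover have "len x < len (x \<otimes> a)"
    using x a unfolding min_reps_def by blast
  ultimately show ?thesis
    by simp
qed

lemma min_reps_coset_minimal:
  assumes K: "K \<subseteq> S" and x: "x \<in> min_reps G S K"
  shows "coset_minimal K x"
proof -
  obtain u y where "coset_minimal K u" "y \<in> W K" "x = u \<otimes> y"
    using coset_minimal_exists[OF K min_reps_closed[OF x]] by blast
  then show ?thesis
    using min_reps_eq_coset_minimal[OF K _ x] by metis
qed

lemma min_reps_length_add:
  "K \<subseteq> S \<Longrightarrow> x \<in> min_reps G S K \<Longrightarrow> y \<in> W K \<Longrightarrow> len (x \<otimes> y) = len x + len y"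
  using coset_minimal_length_add min_reps_coset_minimal by blast

lemma min_reps_unique:
  assumes K: "K \<subseteq> S" and x: "x \<in> min_reps G S K" "x' \<in> min_reps G S K"
    and y: "y \<in> W K" "y' \<in> W K" and eq: "x \<otimes> y = x' \<otimes> y'"
  shows "x' = x"
proof -
  have "x \<in> carrier G" "x' \<in> carrier G" "y \<in> carrier G" "y' \<in> carrier G"
    using min_reps_closed x parabolic_closed[OF K] y by auto
  then have "x' = x \<otimes> (y \<otimes> inv y')"
    using eq by (metis inv_closed m_assoc r_inv r_one)
  then show ?thesis
    using min_reps_eq_coset_minimal[OF K min_reps_coset_minimal[OF K x(1)] x(2)]
      parabolic_mult[OF K y(1) parabolic_inv[OF K y(2)]] by blast
qed

lemma one_in_min_reps: "K \<subseteq> S \<Longrightarrow> \<one> \<in> min_reps G S K"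
  unfolding min_reps_def using cox_len_simple simple_closed by auto

lemma min_reps_iff_Des:
  assumes K: "K \<subseteq> S" and x: "x \<in> carrier G"
  shows "x \<in> min_reps G S K \<longleftrightarrow> K \<inter> Des G S x = {}"
proof -
  have "len x < len (x \<otimes> s) \<longleftrightarrow> \<not> len (x \<otimes> s) < len x" if "s \<in> K" for s
    using cox_len_mult_simple_neq[OF x, of s] that K by auto
  then show ?thesis
    unfolding min_reps_def Des_def using x K by auto
qed

lemma par_comp_eq:
  assumes K: "K \<subseteq> S" and x: "x \<in> min_reps G S K" and y: "y \<in> W K"
  shows "par_comp G S K (x \<otimes> y) = y"
  unfolding par_comp_def
proof (rule the_equality)
  have xc: "x \<in> carrier G" and yc: "y \<in> carrier G"
    using min_reps_closed[OF x] parabolic_closed[OF K y] .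
  then show "y \<in> W K \<and> x \<otimes> y \<otimes> inv y \<in> min_reps G S K"
    using y x by (simp add: m_assoc)
  fix y'
  assume y': "y' \<in> W K \<and> x \<otimes> y \<otimes> inv y' \<in> min_reps G S K"
  have y'c: "y' \<in> carrier G"
    using parabolic_closed[OF K] y' by blast
  have "x \<otimes> y = x \<otimes> y \<otimes> inv y' \<otimes> y'"
    using xc yc y'c by (simp add: m_assoc)
  then have "x \<otimes> y \<otimes> inv y' = x"
    using min_reps_unique[OF K x conjunct2[OF y'] y conjunct1[OF y']] by simp
  then have "y \<otimes> inv y' = \<one>"
    using xc yc y'c by (simp add: m_assoc)
  then show "y' = y"
    using yc y'c by (metis inv_closed inv_equality inv_inv)
qed

lemma parabolic_factorization:
  assumes K: "K \<subseteq> S" and w: "w \<in> carrier G"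
  shows "par_comp G S K w \<in> W K" and "min_comp G S K w \<in> min_reps G S K"
    and "w = min_comp G S K w \<otimes> par_comp G S K w"
proof -
  obtain u y where u: "coset_minimal K u" and y: "y \<in> W K" and w_eq: "w = u \<otimes> y"
    using coset_minimal_exists[OF K w] by blast
  have uX: "u \<in> min_reps G S K"
    using coset_minimal_in_min_reps[OF K u] .
  have par: "par_comp G S K w = y"
    using par_comp_eq[OF K uX y] w_eq by simp
  moreover have "min_comp G S K w = w \<otimes> inv y"
    unfolding min_comp_def par ..
  then have "min_comp G S K w = u"
    using w_eq min_reps_closed[OF uX] parabolic_closed[OF K y] by (simp add: m_assoc)
  ultimately show "par_comp G S K w \<in> W K" "min_comp G S K w \<in> min_reps G S K"
    "w = min_comp G S K w \<otimes> par_comp G S K w"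
    using uX y w_eq by auto
qed

lemma par_comp_closed: "K \<subseteq> S \<Longrightarrow> w \<in> carrier G \<Longrightarrow> par_comp G S K w \<in> carrier G"
  using parabolic_factorization(1) parabolic_closed by blast

lemma par_comp_parabolic: "K \<subseteq> S \<Longrightarrow> w \<in> W K \<Longrightarrow> par_comp G S K w = w"
  using par_comp_eq[OF _ one_in_min_reps] parabolic_closed by fastforce

lemma supp_par_comp_subset: "K \<subseteq> S \<Longrightarrow> w \<in> carrier G \<Longrightarrow> supp G S (par_comp G S K w) \<subseteq> K"
  using supp_subset_of_in_generate parabolic_factorization(1) by blast

lemma components_in_parabolic:
  assumes K: "K \<subseteq> S" and L: "L \<subseteq> S" and y: "y \<in> W K"
  shows "min_comp G S L y \<in> W K" and "par_comp G S L y \<in> W (K \<inter> L)"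
proof -
  define a b where "a = min_comp G S L y" and "b = par_comp G S L y"
  have yc: "y \<in> carrier G"
    using parabolic_closed[OF K y] .
  have a: "a \<in> min_reps G S L" and b: "b \<in> W L" and y_eq: "y = a \<otimes> b"
    using parabolic_factorization[OF L yc] a_def b_def by auto
  obtain as where as: "set as \<subseteq> S" "length as = len a" "wprod as = a"
    using reduced_wordE min_reps_closed[OF a] by blast
  obtain bs where bs: "set bs \<subseteq> S" "length bs = len b" "wprod bs = b"
    using reduced_wordE parabolic_closed[OF L b] by blast
  have "set (as @ bs) \<subseteq> K"
    using reduced_word_in_parabolic[OF K, of "as @ bs"] as bs y y_eq
      min_reps_length_add[OF L a b] wprod_append[of as bs] by simp
  moreover have "set bs \<subseteq> L"
    using reduced_word_in_parabolic[OF L bs(1)] bs b by simp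
  ultimately show "a \<in> W K" "b \<in> W (K \<inter> L)"
    using wprod_in_generate[OF K, of as] wprod_in_generate[of "K \<inter> L" bs] K as bs by auto
qed

lemma min_reps_mult_min_reps:
  assumes K: "K \<subseteq> S" and x: "x \<in> min_reps G S K" and a: "a \<in> min_reps G S L" "a \<in> W K"
  shows "x \<otimes> a \<in> min_reps G S (K \<inter> L)"
  unfolding min_reps_def
proof (intro CollectI conjI ballI)
  have xc: "x \<in> carrier G" and ac: "a \<in> carrier G"
    using min_reps_closed x a by auto
  then show "x \<otimes> a \<in> carrier G"
    by simp
  fix s
  assume s: "s \<in> K \<inter> L"
  then have sc: "s \<in> carrier G"
    using K simple_closed by blast
  have "len (x \<otimes> a \<otimes> s) = len x + len (a \<otimes> s)"
    using min_reps_length_add[OF K x parabolic_mult[OF K a(2) generate.incl]] s xc ac sc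
    by (simp add: m_assoc)
  moreover have "len a < len (a \<otimes> s)"
    using a s unfolding min_reps_def by blast
  moreover have "len (x \<otimes> a) = len x + len a"
    using min_reps_length_add[OF K x a(2)] .
  ultimately show "len (x \<otimes> a) < len (x \<otimes> a \<otimes> s)"
    by simp
qed

lemma par_comp_par_comp:
  assumes K: "K \<subseteq> S" and L: "L \<subseteq> S" and w: "w \<in> carrier G"
  shows "par_comp G S L (par_comp G S K w) = par_comp G S (K \<inter> L) w"
proof -
  define x y where "x = min_comp G S K w" and "y = par_comp G S K w"
  have x: "x \<in> min_reps G S K" and y: "y \<in> W K" and w_eq: "w = x \<otimes> y"
    using parabolic_factorization[OF K w] x_def y_def by auto
  have KL: "K \<inter> L \<subseteq> S"
    using K by blast
  define a b where "a = min_comp G S L y" and "b = par_comp G S L y"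
  have y_eq: "y = a \<otimes> b" and a: "a \<in> min_reps G S L" "a \<in> W K" and b: "b \<in> W (K \<inter> L)"
    using parabolic_factorization[OF L parabolic_closed[OF K y]] components_in_parabolic[OF K L y]
    by (auto simp: a_def b_def)
  have "w = (x \<otimes> a) \<otimes> b"
    using w_eq y_eq min_reps_closed[OF x] min_reps_closed[OF a(1)] parabolic_closed[OF KL b]
    by (simp add: m_assoc)
  then have "par_comp G S (K \<inter> L) w = b"
    using par_comp_eq[OF KL min_reps_mult_min_reps[OF K x a] b] by simp
  then show ?thesis
    using b_def y_def by simp
qed

section \<open>The order on W\<close>

lemma par_comp_supp_self: "w \<in> carrier G \<Longrightarrow> par_comp G S (supp G S w) w = w"
  using par_comp_parabolic[OF supp_subset_S in_generate_supp] by blast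

lemma cox_le_supp_subset:
  assumes "u \<preceq> v"
  shows "supp G S u \<subseteq> supp G S v"
proof -
  have v: "v \<in> carrier G" and u: "par_comp G S (supp G S u) v = u"
    using assms unfolding cox_le_def by auto
  have vu: "supp G S v \<inter> supp G S u \<subseteq> S"
    using supp_subset_S by blast
  have "u = par_comp G S (supp G S v \<inter> supp G S u) v"
    using u par_comp_par_comp[OF supp_subset_S[of v] supp_subset_S[of u] v] par_comp_supp_self[OF v]
    by simp
  then have "supp G S u \<subseteq> supp G S v \<inter> supp G S u"
    using supp_par_comp_subset[OF vu v] by simp
  then show ?thesis
    by blast
qed

lemma cox_le_antisym:
  assumes "u \<preceq> v" "v \<preceq> u"
  shows "u = v"
proof -
  have "supp G S u = supp G S v"
    using cox_le_supp_subset assms by blast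
  then show ?thesis
    using assms par_comp_supp_self unfolding cox_le_def by metis
qed

lemma cox_le_trans:
  assumes "u \<preceq> w" "w \<preceq> v"
  shows "u \<preceq> v"
proof -
  have v: "v \<in> carrier G"
    using assms(2) by (simp add: cox_le_def)
  have "par_comp G S (supp G S u) v = par_comp G S (supp G S w \<inter> supp G S u) v"
    using cox_le_supp_subset[OF assms(1)] by (simp add: Int_absorb1)
  also have "\<dots> = par_comp G S (supp G S u) (par_comp G S (supp G S w) v)"
    using par_comp_par_comp[OF supp_subset_S[of w] supp_subset_S[of u] v] by simp
  also have "\<dots> = u"
    using assms by (simp add: cox_le_def)
  finally show ?thesis
    using assms by (simp add: cox_le_def)
qed

lemma cox_le_par_comp:
  assumes K: "K \<subseteq> S" and v: "v \<in> carrier G"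
  shows "par_comp G S K v \<preceq> v"
proof -
  define x where "x = par_comp G S K v"
  have x: "x \<in> carrier G"
    using par_comp_closed[OF K v] x_def by simp
  have "par_comp G S (supp G S x) v = par_comp G S (K \<inter> supp G S x) v"
    using supp_par_comp_subset[OF K v] x_def by (simp add: Int_absorb1)
  also have "\<dots> = x"
    using par_comp_par_comp[OF K supp_subset_S v] par_comp_supp_self[OF x] x_def by simp
  finally show ?thesis
    unfolding cox_le_def using x v x_def by simp
qed

lemma cox_le_par_comp_iff:
  assumes w: "w \<preceq> v" and K: "K \<subseteq> S"
  shows "w \<preceq> par_comp G S K v \<longleftrightarrow> supp G S w \<subseteq> K"
proof
  assume "w \<preceq> par_comp G S K v"
  then show "supp G S w \<subseteq> K"
    using cox_le_supp_subset supp_par_comp_subset[OF K] w by (fastforce simp: cox_le_def)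
next
  assume wK: "supp G S w \<subseteq> K"
  have v: "v \<in> carrier G"
    using w by (simp add: cox_le_def)
  have "par_comp G S (supp G S w) (par_comp G S K v) = par_comp G S (supp G S w) v"
    using par_comp_par_comp[OF K supp_subset_S v] wK by (simp add: Int_absorb1)
  then show "w \<preceq> par_comp G S K v"
    using w par_comp_closed[OF K v] by (simp add: cox_le_def)
qed

lemma cox_le_iff_supp_subset:
  assumes "w \<preceq> v" "z \<preceq> v"
  shows "w \<preceq> z \<longleftrightarrow> supp G S w \<subseteq> supp G S z"
  using cox_le_par_comp_iff[OF assms(1) supp_subset_S, of z] assms(2) by (simp add: cox_le_def)

lemma par_comp_mono:
  assumes "K \<subseteq> L" "L \<subseteq> S" "v \<in> carrier G"
  shows "par_comp G S K v \<preceq> par_comp G S L v"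
proof -
  have "par_comp G S K v \<preceq> v"
    using cox_le_par_comp assms by blast
  then show ?thesis
    using cox_le_par_comp_iff[of _ v L] supp_par_comp_subset[of K v] assms by blast
qed

lemma par_comp_eq_iff:
  assumes K: "K \<subseteq> S" and w: "w \<preceq> v"
  shows "par_comp G S K v = w \<longleftrightarrow>
    supp G S w \<subseteq> K \<and> K \<inter> Des G S (min_comp G S (supp G S w) v) = {}"
proof -
  define x where "x = min_comp G S (supp G S w) v"
  have v: "v \<in> carrier G" and wc: "w \<in> carrier G" and w_eq: "par_comp G S (supp G S w) v = w"
    using w unfolding cox_le_def by auto
  have v_eq: "v = x \<otimes> w"
    using parabolic_factorization(3)[OF supp_subset_S[of w] v] w_eq x_def by simp
  have x: "x \<in> carrier G"
    using min_reps_closed[OF parabolic_factorization(2)[OF supp_subset_S[of w] v]] x_def by simp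
  show ?thesis
    unfolding x_def[symmetric]
  proof
    assume e: "par_comp G S K v = w"
    have "supp G S w \<subseteq> K"
      using supp_par_comp_subset[OF K v] e by simp
    moreover have "v = min_comp G S K v \<otimes> w"
      using parabolic_factorization(3)[OF K v] e by simp
    then have "min_comp G S K v = x"
      using v_eq min_reps_closed[OF parabolic_factorization(2)[OF K v]] x wc by (metis right_cancel)
    then have "K \<inter> Des G S x = {}"
      using parabolic_factorization(2)[OF K v] min_reps_iff_Des[OF K x] by simp
    ultimately show "supp G S w \<subseteq> K \<and> K \<inter> Des G S x = {}"
      by blast
  next
    assume a: "supp G S w \<subseteq> K \<and> K \<inter> Des G S x = {}"
    then have "x \<in> min_reps G S K"
      using min_reps_iff_Des[OF K x] by simp
    moreover have "w \<in> W K"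
      using in_generate_supp[OF wc] mono_generate a by blast
    ultimately show "par_comp G S K v = w"
      using par_comp_eq[OF K] v_eq by simp
  qed
qed

section \<open>Intervals\<close>

lemma par_comp_in_interval:
  assumes "u \<preceq> v" "supp G S u \<subseteq> K" "K \<subseteq> S"
  shows "par_comp G S K v \<in> cox_interval G S u v"
  using assms cox_le_par_comp_iff cox_le_par_comp unfolding cox_interval_def
  by (simp add: cox_le_def)

lemma int_join_eq_par_comp:
  assumes w: "w \<in> cox_interval G S u v" and g: "g \<in> cox_interval G S u v"
  shows "int_join G S u v w g = par_comp G S (supp G S w \<union> supp G S g) v"
proof -
  define K where "K = supp G S w \<union> supp G S g"
  define z where "z = par_comp G S K v"
  have wv: "w \<preceq> v" and gv: "g \<preceq> v" and uv: "u \<preceq> v"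
    using w g cox_le_trans unfolding cox_interval_def by blast+
  have K: "K \<subseteq> S"
    using supp_subset_S K_def by blast
  have zI: "z \<in> cox_interval G S u v"
    using par_comp_in_interval[OF uv _ K] cox_le_supp_subset w
    unfolding z_def K_def cox_interval_def by blast
  have upper: "w \<preceq> z" "g \<preceq> z"
    using cox_le_par_comp_iff[OF wv K] cox_le_par_comp_iff[OF gv K] z_def K_def by auto
  have least: "z \<preceq> z'" if z': "z' \<in> cox_interval G S u v" "w \<preceq> z'" "g \<preceq> z'" for z'
  proof -
    have "supp G S z \<subseteq> K"
      using supp_par_comp_subset[OF K] uv z_def by (simp add: cox_le_def)
    also have "K \<subseteq> supp G S z'"
      using cox_le_supp_subset z'(2,3) K_def by blast
    finally show ?thesis
      using cox_le_iff_supp_subset[of z v z'] zI z' unfolding cox_interval_def by blast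
  qed
  show ?thesis
    unfolding int_join_def z_def[symmetric] K_def[symmetric]
    using zI upper least cox_le_antisym by (intro the_equality) blast+
qed

lemma supp_int_join:
  assumes "w \<in> cox_interval G S u v" "g \<in> cox_interval G S u v"
  shows "supp G S (int_join G S u v w g) = supp G S w \<union> supp G S g"
proof -
  define K where "K = supp G S w \<union> supp G S g"
  have K: "K \<subseteq> S"
    using supp_subset_S K_def by blast
  have wv: "w \<preceq> v" and gv: "g \<preceq> v"
    using assms unfolding cox_interval_def by auto
  then have "w \<preceq> par_comp G S K v" "g \<preceq> par_comp G S K v"
    using cox_le_par_comp_iff[OF wv K] cox_le_par_comp_iff[OF gv K] K_def by auto
  then have "K \<subseteq> supp G S (par_comp G S K v)"
    using cox_le_supp_subset K_def by blast
  moreover have "supp G S (par_comp G S K v) \<subseteq> K"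
    using supp_par_comp_subset[OF K] wv by (simp add: cox_le_def)
  ultimately show ?thesis
    unfolding int_join_eq_par_comp[OF assms] K_def[symmetric] by blast
qed

lemma int_meet_par_comp:
  assumes uv: "u \<preceq> v" and K: "supp G S u \<subseteq> K" "K \<subseteq> S" and L: "supp G S u \<subseteq> L" "L \<subseteq> S"
  shows "int_meet G S u v (par_comp G S K v) (par_comp G S L v) = par_comp G S (K \<inter> L) v"
proof -
  define z where "z = par_comp G S (K \<inter> L) v"
  have v: "v \<in> carrier G"
    using uv by (simp add: cox_le_def)
  have KL: "K \<inter> L \<subseteq> S"
    using K by blast
  have zI: "z \<in> cox_interval G S u v"
    using par_comp_in_interval[OF uv _ KL] K L z_def by blast
  have lower: "z \<preceq> par_comp G S K v" "z \<preceq> par_comp G S L v"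
    using par_comp_mono[OF _ _ v] K L z_def by auto
  have greatest: "z' \<preceq> z"
    if "z' \<in> cox_interval G S u v" "z' \<preceq> par_comp G S K v" "z' \<preceq> par_comp G S L v" for z'
    using that cox_le_par_comp_iff K L KL unfolding cox_interval_def z_def by auto
  show ?thesis
    unfolding int_meet_def z_def[symmetric]
    using zI lower greatest cox_le_antisym by (intro the_equality) blast+
qed

lemma par_comp_fibre:
  assumes "w \<preceq> v"
  shows "{K. K \<subseteq> supp G S v \<and> par_comp G S K v = w} =
    {K. supp G S w \<subseteq> K \<and> K \<subseteq> supp G S v - Des G S (min_comp G S (supp G S w) v)}"
proof -
  have "K \<subseteq> supp G S v \<and> par_comp G S K v = w \<longleftrightarrow>
      supp G S w \<subseteq> K \<and> K \<subseteq> supp G S v - Des G S (min_comp G S (supp G S w) v)" for K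
  proof (cases "K \<subseteq> supp G S v")
    case True
    then show ?thesis
      using par_comp_eq_iff[OF order_trans[OF True supp_subset_S] assms] by blast
  qed auto
  then show ?thesis
    by blast
qed

end

theorem mainTheorem12:
  fixes G :: "('a, 'b) monoid_scheme" and S :: "'a set" and u v :: 'a
  assumes cox: "coxeter_system G S"
    and uv: "cox_le G S u v"
  defines "I \<equiv> supp G S u" and "J \<equiv> supp G S v"
  defines "P \<equiv> {K. I \<subseteq> K \<and> K \<subseteq> J}"
    and "Itv \<equiv> cox_interval G S u v"
    and "Gv \<equiv> (\<lambda>K. par_comp G S K v)"
    and "F \<equiv> supp G S"
  shows
    \<comment> \<open>well-definedness\<close>
    "(\<forall>K\<in>P. Gv K \<in> Itv) \<and> (\<forall>w\<in>Itv. F w \<in> P)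
     \<comment> \<open>(a)\<close>
     \<and> (\<forall>w\<in>Itv. Gv (F w) = w) \<and> (\<forall>K\<in>P. F (Gv K) \<subseteq> K)
     \<comment> \<open>(b)\<close>
     \<and> inj_on F Itv
     \<and> (\<forall>w\<in>Itv. \<forall>g\<in>Itv. cox_le G S w g \<longrightarrow> F w \<subseteq> F g)
     \<and> (\<forall>w\<in>Itv. \<forall>g\<in>Itv. F (int_join G S u v w g) = F w \<union> F g)
     \<comment> \<open>(c)\<close>
     \<and> Gv ` P = Itv
     \<and> (\<forall>K\<in>P. \<forall>L\<in>P. K \<subseteq> L \<longrightarrow> cox_le G S (Gv K) (Gv L))
     \<and> (\<forall>K\<in>P. \<forall>L\<in>P. Gv (K \<inter> L) = int_meet G S u v (Gv K) (Gv L))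
     \<comment> \<open>(d)\<close>
     \<and> (\<forall>w\<in>Itv.
          (\<forall>K\<in>{K\<in>P. Gv K = w}. \<forall>L\<in>{K\<in>P. Gv K = w}.
              K \<union> L \<in> {K\<in>P. Gv K = w} \<and> K \<inter> L \<in> {K\<in>P. Gv K = w})
        \<and> F w \<in> {K\<in>P. Gv K = w} \<and> (\<forall>K\<in>{K\<in>P. Gv K = w}. F w \<subseteq> K)
        \<and> J - Des G S (min_comp G S (F w) v) \<in> {K\<in>P. Gv K = w}
        \<and> (\<forall>K\<in>{K\<in>P. Gv K = w}. K \<subseteq> J - Des G S (min_comp G S (F w) v)))"
proof -
  interpret coxeter G S
    using cox by (rule coxeter.intro)
  have v: "v \<in> carrier G" and P_S: "\<And>K. K \<in> P \<Longrightarrow> K \<subseteq> S"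
    using uv supp_subset_S by (auto simp: cox_le_def P_def J_def)
  have Gv_Itv: "Gv K \<in> Itv" if "K \<in> P" for K
    using par_comp_in_interval[OF uv] that P_S by (auto simp: P_def I_def Gv_def Itv_def)
  have F_P: "F w \<in> P" and Gv_F: "Gv (F w) = w" if "w \<in> Itv" for w
    using that cox_le_supp_subset
    by (auto simp: Itv_def cox_interval_def P_def F_def I_def J_def Gv_def cox_le_def)
  have fibre: "{K\<in>P. Gv K = w} = {K. F w \<subseteq> K \<and> K \<subseteq> J - Des G S (min_comp G S (F w) v)}"
    and F_fibre: "F w \<in> {K\<in>P. Gv K = w}" if "w \<in> Itv" for w
    using par_comp_fibre[of w v] F_P[OF that] Gv_F[OF that] that
    by (auto simp: Itv_def cox_interval_def P_def F_def J_def Gv_def)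
  have "inj_on F Itv" and "Gv ` P = Itv"
    using Gv_F Gv_Itv F_P by (metis inj_on_inverseI, force)
  moreover have "F (Gv K) \<subseteq> K" if "K \<in> P" for K
    using supp_par_comp_subset[OF P_S[OF that] v] by (simp add: F_def Gv_def)
  ultimately show ?thesis
    using Gv_Itv F_P Gv_F fibre F_fibre cox_le_supp_subset supp_int_join
      int_meet_par_comp[OF uv] P_S par_comp_mono[OF _ _ v]
    by (auto simp: F_def Gv_def Itv_def P_def I_def)
qed

end
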